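(* Let $d\in\mathbb N$, $\mathcal D=\{1,\dots,d\}$, $\mathbf u\subseteq\mathcal D$, let $w:\mathbb Z^d\to[1,\infty)$ be a weight function and $f\in \mathcal A^w(\mathbb T^d)$. Then for any weight function $w_{\mathbf u}:\mathbb Z^{|\mathbf u|}\to[1,\infty)$ with $$w_{\mathbf u}(\mathbf k_{\mathbf u})\le w(\mathbf k)\quad\text{for all }\mathbf k\in\mathbb Z^d\text{ with }\mathbf k_{\mathbf u^c}=\mathbf 0,$$ we have $\mathrm P_{\mathbf u}f\in \mathcal A^{w_{\mathbf u}}(\mathbb T^{|\mathbf u|})$ and $f_{\mathbf u}\in \mathcal A^{w_{\mathbf u}}(\mathbb T^{|\mathbf u|})$.
   Context: $\mathbb T=[0,1)$ with periodic identification; $c_{\mathbf k}(g)=\int_{\mathbb T^m} g(\mathbf x)e^{-2\pi i\mathbf k\cdot\mathbf x}\,d\mathbf x$. For a weight $v:\mathbb Z^m\to[1,\infty)$ the weighted Wiener algebra is $\mathcal A^{v}(\mathbb T^m)=\{g\in \mathrm L_1(\mathbb T^m): \|g\|_{\mathcal A^v}=\sum_{\mathbf k\in\mathbb Z^m}v(\mathbf k)|c_{\mathbf k}(g)|<\infty\}$. For $\mathbf u\subseteq\mathcal D$, $\mathbf u^c=\mathcal D\setminus\mathbf u$, $\mathbf x_{\mathbf u}=(x_i)_{i\in\mathbf u}$, and $\mathbf k_{\mathbf u}$ analogously. The projection is $\mathrm P_{\mathbf u}f(\mathbf x_{\mathbf u})=\int_{\mathbb T^{|\mathbf u^c|}}f(\mathbf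 x)\,d\mathbf x_{\mathbf u^c}$; the ANOVA terms are defined recursively by $f_{\mathbf u}=\mathrm P_{\mathbf u}f-\sum_{\mathbf v\subsetneq\mathbf u}f_{\mathbf v}$; both are regarded as functions on $\mathbb T^{|\mathbf u|}$. Convention $\mathbb Z^{0}=\{0\}$. *)

theory Defs
  imports "HOL-Analysis.Analysis"
begin

text \<open>Torus T^I for a finite coordinate set I: points are functions nat => real,
  extensional outside I (PiE), with coordinates in [0,1); product Lebesgue measure.
  For I = {} this is the one-point probability space (convention Z^0 = {0}).\<close>
definition torus :: "nat set \<Rightarrow> (nat \<Rightarrow> real) measure" where
  "torus I = PiM I (\<lambda>_. lebesgue_on {0..<1::real})"

definition lattice :: "nat set \<Rightarrow> (nat \<Rightarrow> int) set" where
  "lattice I = {k. \<forall>i. i \<notin> I \<longrightarrow> k i = 0}"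

definition fourier_coeff :: "nat set \<Rightarrow> ((nat \<Rightarrow> real) \<Rightarrow> complex) \<Rightarrow> (nat \<Rightarrow> int) \<Rightarrow> complex" where
  "fourier_coeff I g k =
     (LINT x | torus I. g x * cis (- 2 * pi * (\<Sum>i\<in>I. of_int (k i) * x i)))"

definition weight :: "nat set \<Rightarrow> ((nat \<Rightarrow> int) \<Rightarrow> real) \<Rightarrow> bool" where
  "weight I v \<longleftrightarrow> (\<forall>k\<in>lattice I. 1 \<le> v k)"

definition wiener :: "nat set \<Rightarrow> ((nat \<Rightarrow> int) \<Rightarrow> real) \<Rightarrow> ((nat \<Rightarrow> real) \<Rightarrow> complex) set" where
  "wiener I v = {g. integrable (torus I) g \<and>
      (\<lambda>k. v k * norm (fourier_coeff I g k)) summable_on lattice I}"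

definition proj :: "nat set \<Rightarrow> ((nat \<Rightarrow> real) \<Rightarrow> complex) \<Rightarrow> nat set \<Rightarrow> (nat \<Rightarrow> real) \<Rightarrow> complex" where
  "proj D f u = (\<lambda>xu. LINT y | torus (D - u). f (merge u (D - u) (xu, y)))"

function anova :: "nat set \<Rightarrow> ((nat \<Rightarrow> real) \<Rightarrow> complex) \<Rightarrow> nat set \<Rightarrow> (nat \<Rightarrow> real) \<Rightarrow> complex" where
  "anova D f u = (if finite u then
      (\<lambda>x. proj D f u x - (\<Sum>v\<in>{v. v \<subset> u}. anova D f v (restrict x v)))
    else (\<lambda>_. 0))"
  by auto
termination
  by (relation "Wellfounded.measure (\<lambda>(D, f, u). card u)") (auto intro: psubset_card_mono)

end

theory Submission
  imports Defs "HOL-Probability.Probability_Measure"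
begin

text \<open>By Fubini, the k-th Fourier coefficient of P_u f is the k-th coefficient of f for every
  k in Z^u, so the weighted coefficient series of P_u f is a subseries of that of f, dominated
  termwise because w_u \<le> w there. The ANOVA term f_u is P_u f minus the lifts of the f_v with
  v \<subset> u to T^u; lifting from T^v to T^u keeps the coefficients on Z^v and adds zeros elsewhere,
  and the Wiener space is closed under finite sums and differences, so induction on u finishes.\<close>

abbreviation character :: "nat set \<Rightarrow> (nat \<Rightarrow> int) \<Rightarrow> (nat \<Rightarrow> real) \<Rightarrow> complex" where
  "character I k x \<equiv> cis (- 2 * pi * (\<Sum>i\<in>I. of_int (k i) * x i))"

lemma lattice_mono: "A \<subseteq> B \<Longrightarrow> lattice A \<subseteq> lattice B"
  by (auto simp: lattice_def)

lemma prob_space_unit_interval: "prob_space (lebesgue_on {0..<1::real})"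
  by (rule prob_spaceI) (simp add: emeasure_restrict_space)

interpretation unit_cubes: product_prob_space "\<lambda>_::nat. lebesgue_on {0..<1::real}" UNIV
  unfolding product_prob_space_def product_prob_space_axioms_def product_sigma_finite_def
  using prob_space_unit_interval prob_space_imp_sigma_finite by blast

lemma integral_cis_int_unit_interval:
  fixes k :: int
  assumes "k \<noteq> 0"
  shows "(LINT t | lebesgue_on {0..<1::real}. cis (- 2 * pi * (of_int k * t))) = 0"
proof -
  define c where "c = - 2 * pi * of_int k"
  have "c \<noteq> 0" using assms by (simp add: c_def)
  define F where "F t = cis (c * t) / (\<i> * of_real c)" for t
  have "(F has_vector_derivative cis (c * t)) (at t within {0..1})" for t
    unfolding F_def has_vector_derivative_def
    by (rule has_derivative_eq_rhs, (rule derivative_eq_intros has_derivative_cis | simp)+)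
      (use \<open>c \<noteq> 0\<close> in \<open>auto simp: fun_eq_iff scaleR_conv_of_real field_simps\<close>)
  then have "((\<lambda>t. cis (c * t)) has_integral (F 1 - F 0)) {0..1}"
    by (intro fundamental_theorem_of_calculus) auto
  moreover have "cis c = 1"
    using cis_multiple_2pi[of "of_int (- k)"] by (simp add: c_def)
  ultimately have "((\<lambda>t. cis (c * t)) has_integral 0) {0..<1}"
    by (subst has_integral_spike_set_eq[where T="{0..1}"])
      (auto simp: F_def intro: negligible_subset[of "{1}"])
  moreover have "(\<lambda>t. cis (c * t)) \<in> borel_measurable (lebesgue_on {0..<1::real})"
    by (intro continuous_imp_measurable_on_sets_lebesgue continuous_intros) auto
  then have "integrable (lebesgue_on {0..<1::real}) (\<lambda>t. cis (c * t))"
    using prob_space_unit_interval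
    by (intro finite_measure.integrable_const_bound[where B=1]) (auto simp: prob_space_def)
  ultimately have "(LINT t | lebesgue_on {0..<1::real}. cis (c * t)) = 0"
    by (simp add: lebesgue_integral_eq_integral integral_unique)
  then show ?thesis by (simp add: c_def algebra_simps)
qed

lemma borel_measurable_ident_unit_interval[measurable]:
  "(\<lambda>t. t) \<in> borel_measurable (lebesgue_on {0..<1::real})"
  by (intro continuous_imp_measurable_on_sets_lebesgue continuous_intros) auto

lemma borel_measurable_component_unit_cube[measurable]:
  "i \<in> I \<Longrightarrow> (\<lambda>x. x i) \<in> borel_measurable (Pi\<^sub>M I (\<lambda>_. lebesgue_on {0..<1::real}))"
  using measurable_compose[OF measurable_component_singleton[of i I] borel_measurable_ident_unit_interval]
  by simp

lemma borel_measurable_character[measurable]: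
  "character I k \<in> borel_measurable (torus I)"
proof -
  have "(\<lambda>x. - 2 * pi * (\<Sum>i\<in>I. of_int (k i) * x i)) \<in> borel_measurable (torus I)"
    unfolding torus_def by measurable
  moreover have "cis \<in> borel_measurable borel"
    by (intro borel_measurable_continuous_onI continuous_intros)
  ultimately show ?thesis
    by (rule measurable_compose)
qed

lemma integrable_mult_character:
  assumes "integrable (torus I) g"
  shows "integrable (torus I) (\<lambda>x. g x * character I k x)"
  by (rule Bochner_Integration.integrable_bound[OF assms])
    (use assms in \<open>measurable, simp add: norm_mult\<close>)

lemma integrable_proj:
  assumes "finite D" "u \<subseteq> D" "integrable (torus D) f"
  shows "integrable (torus u) (proj D f u)"
proof -
  have disj: "u \<inter> (D - u) = {}" and fin: "finite u" "finite (D - u)"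
    using assms finite_subset by auto
  interpret u: finite_product_sigma_finite "\<lambda>_::nat. lebesgue_on {0..<1::real}" u
    by standard (rule fin(1))
  interpret co_u: finite_product_sigma_finite "\<lambda>_::nat. lebesgue_on {0..<1::real}" "D - u"
    by standard (rule fin(2))
  interpret P: pair_sigma_finite "torus u" "torus (D - u)"
    unfolding torus_def ..
  have "u \<union> (D - u) = D"
    using assms(2) by auto
  then have "integrable (torus (u \<union> (D - u))) f"
    using assms(3) by simp
  then have "integrable (distr (torus u \<Otimes>\<^sub>M torus (D - u)) (torus (u \<union> (D - u))) (merge u (D - u))) f"
    unfolding torus_def using unit_cubes.distr_merge[OF disj fin] by simp
  then have "integrable (torus u \<Otimes>\<^sub>M torus (D - u)) (\<lambda>x. f (merge u (D - u) x))"
    unfolding torus_def by (rule integrable_distr[OF measurable_merge])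
  then show ?thesis
    using P.integrable_fst' by (simp add: proj_def)
qed

lemma fourier_coeff_proj:
  assumes "finite D" "u \<subseteq> D" "integrable (torus D) f" "k \<in> lattice u"
  shows "fourier_coeff u (proj D f u) k = fourier_coeff D f k"
proof -
  define J where "J = D - u"
  have D: "D = u \<union> J" and disj: "u \<inter> J = {}" and fin: "finite u" "finite J"
    using assms finite_subset by (auto simp: J_def)
  have character_merge: "character D k (merge u J (x, y)) = character u k x" for x y
  proof -
    have "(\<Sum>i\<in>J. of_int (k i) * merge u J (x, y) i) = 0"
      using \<open>k \<in> lattice u\<close> disj by (intro sum.neutral) (auto simp: lattice_def)
    then have "(\<Sum>i\<in>D. of_int (k i) * merge u J (x, y) i) = (\<Sum>i\<in>u. of_int (k i) * x i)"
      unfolding D using fin disj by (simp add: sum.union_disjoint merge_def)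
    then show ?thesis by simp
  qed
  have "integrable (torus (u \<union> J)) (\<lambda>x. f x * character D k x)"
    using integrable_mult_character[OF assms(3)] D by simp
  then have "fourier_coeff D f k
      = (LINT x|torus u. LINT y|torus J. f (merge u J (x, y)) * character D k (merge u J (x, y)))"
    unfolding fourier_coeff_def torus_def D using unit_cubes.product_integral_fold[OF disj fin]
    by simp
  also have "\<dots> = fourier_coeff u (proj D f u) k"
    unfolding character_merge by (simp add: fourier_coeff_def proj_def J_def)
  finally show ?thesis by simp
qed

lemma torus_eq_distr_restrict:
  "finite u \<Longrightarrow> v \<subseteq> u \<Longrightarrow> torus v = distr (torus u) (torus v) (\<lambda>x. restrict x v)"
  unfolding torus_def by (rule unit_cubes.distr_restrict) auto

lemma integrable_restrict_torus:
  fixes g :: "(nat \<Rightarrow> real) \<Rightarrow> complex"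
  assumes "finite u" "v \<subseteq> u" "integrable (torus v) g"
  shows "integrable (torus u) (\<lambda>x. g (restrict x v))"
proof -
  have "integrable (distr (torus u) (torus v) (\<lambda>x. restrict x v)) g"
    by (subst torus_eq_distr_restrict[OF assms(1,2), symmetric]) (rule assms(3))
  then show ?thesis
    unfolding torus_def by (rule integrable_distr[OF measurable_restrict_subset[OF assms(2)]])
qed

lemma fourier_coeff_restrict:
  fixes g :: "(nat \<Rightarrow> real) \<Rightarrow> complex"
  assumes "finite u" "v \<subseteq> u" "integrable (torus v) g" "k \<in> lattice v"
  shows "fourier_coeff u (\<lambda>x. g (restrict x v)) k = fourier_coeff v g k"
proof -
  have character_restrict: "character v k (restrict x v) = character u k x" for x
  proof -
    have "(\<Sum>i\<in>u. of_int (k i) * x i) = (\<Sum>i\<in>v. of_int (k i) * x i)"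
      using assms by (intro sum.mono_neutral_right) (auto simp: lattice_def)
    also have "\<dots> = (\<Sum>i\<in>v. of_int (k i) * restrict x v i)"
      by simp
    finally show ?thesis by simp
  qed
  define h where "h y = g y * character v k y" for y
  have h: "h \<in> borel_measurable (torus v)"
    unfolding h_def using assms(3) by measurable
  have "fourier_coeff v g k = integral\<^sup>L (torus v) h"
    by (simp add: fourier_coeff_def h_def[abs_def])
  also have "\<dots> = integral\<^sup>L (distr (torus u) (torus v) (\<lambda>x. restrict x v)) h"
    by (subst torus_eq_distr_restrict[OF assms(1,2), symmetric]) (rule refl)
  also have "\<dots> = (LINT x|torus u. h (restrict x v))"
    by (rule integral_distr)
      (use h assms(2) in \<open>auto simp: torus_def intro: measurable_restrict_subset\<close>)
  also have "\<dots> = fourier_coeff u (\<lambda>x. g (restrict x v)) k"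
    unfolding h_def character_restrict fourier_coeff_def ..
  finally show ?thesis by simp
qed

lemma integral_torus_insert_character_zero:
  assumes "finite I" "j \<notin> I" "k \<noteq> 0"
    and indep: "\<And>x t. h (x(j := t)) = h x"
    and int: "integrable (torus (insert j I)) (\<lambda>x. h x * cis (- 2 * pi * (of_int k * x j)))"
  shows "(LINT x|torus (insert j I). h x * cis (- 2 * pi * (of_int k * x j))) = 0"
proof -
  have "(LINT t|lebesgue_on {0..<1::real}. h (x(j := t)) * cis (- 2 * pi * (of_int k * (x(j := t)) j))) = 0"
    for x
    using integral_cis_int_unit_interval[OF \<open>k \<noteq> 0\<close>] by (simp add: indep)
  then show ?thesis
    unfolding torus_def unit_cubes.product_integral_insert[OF assms(1,2) int[unfolded torus_def]]
    by simp
qed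

lemma fourier_coeff_restrict_eq_0:
  fixes g :: "(nat \<Rightarrow> real) \<Rightarrow> complex"
  assumes "finite u" "v \<subseteq> u" "integrable (torus v) g" "k \<in> lattice u - lattice v"
  shows "fourier_coeff u (\<lambda>x. g (restrict x v)) k = 0"
proof -
  obtain j where j: "j \<in> u" "j \<notin> v" "k j \<noteq> 0"
    using assms(4) by (auto simp: lattice_def)
  define I where "I = u - {j}"
  have u: "u = insert j I" "j \<notin> I" "finite I"
    using j assms(1) by (auto simp: I_def)
  define h where "h x = g (restrict x v) * character I k x" for x
  have split: "g (restrict x v) * character u k x = h x * cis (- 2 * pi * (of_int (k j) * x j))" for x
  proof -
    have "(\<Sum>i\<in>u. of_int (k i) * x i) = of_int (k j) * x j + (\<Sum>i\<in>I. of_int (k i) * x i)"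
      using u by simp
    then show ?thesis
      by (simp add: h_def cis_mult algebra_simps)
  qed
  have "h (x(j := t)) = h x" for x t
  proof -
    have "restrict (x(j := t)) v = restrict x v"
      using j by (auto simp: restrict_def)
    moreover have "(\<Sum>i\<in>I. of_int (k i) * (x(j := t)) i) = (\<Sum>i\<in>I. of_int (k i) * x i)"
      using u(2) by (intro sum.cong) auto
    ultimately show ?thesis
      by (simp only: h_def)
  qed
  moreover have "integrable (torus u) (\<lambda>x. g (restrict x v) * character u k x)"
    using assms by (intro integrable_mult_character integrable_restrict_torus)
  ultimately show ?thesis
    unfolding fourier_coeff_def split unfolding u(1)
    using integral_torus_insert_character_zero[OF u(3,2) j(3)] by simp
qed

lemma fourier_coeff_add:
  assumes "integrable (torus I) g" "integrable (torus I) h"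
  shows "fourier_coeff I (\<lambda>x. g x + h x) k = fourier_coeff I g k + fourier_coeff I h k"
  unfolding fourier_coeff_def distrib_right
  using assms by (intro Bochner_Integration.integral_add integrable_mult_character)

lemma fourier_coeff_uminus: "fourier_coeff I (\<lambda>x. - g x) k = - fourier_coeff I g k"
  by (simp add: fourier_coeff_def)

lemma wiener_zero: "(\<lambda>_. 0) \<in> wiener I v"
  by (simp add: wiener_def fourier_coeff_def)

lemma wiener_uminus: "g \<in> wiener I v \<Longrightarrow> (\<lambda>x. - g x) \<in> wiener I v"
  by (simp add: wiener_def fourier_coeff_uminus)

lemma wiener_add:
  assumes nonneg: "\<And>k. k \<in> lattice I \<Longrightarrow> 0 \<le> v k"
    and g: "g \<in> wiener I v" and h: "h \<in> wiener I v"
  shows "(\<lambda>x. g x + h x) \<in> wiener I v"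
proof -
  have int: "integrable (torus I) g" "integrable (torus I) h"
    using g h by (auto simp: wiener_def)
  have "(\<lambda>k. v k * norm (fourier_coeff I g k) + v k * norm (fourier_coeff I h k)) summable_on lattice I"
    using g h by (intro summable_on_add) (auto simp: wiener_def)
  then have "(\<lambda>k. v k * norm (fourier_coeff I (\<lambda>x. g x + h x) k)) summable_on lattice I"
  proof (rule summable_on_comparison_test)
    fix k assume "k \<in> lattice I"
    then show "v k * norm (fourier_coeff I (\<lambda>x. g x + h x) k)
        \<le> v k * norm (fourier_coeff I g k) + v k * norm (fourier_coeff I h k)"
      and "0 \<le> v k * norm (fourier_coeff I (\<lambda>x. g x + h x) k)"
      using nonneg[of k] norm_triangle_ineq
      by (auto simp: fourier_coeff_add[OF int] distrib_left[symmetric] intro: mult_left_mono)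
  qed
  then show ?thesis
    using int by (simp add: wiener_def)
qed

lemma wiener_diff:
  assumes "\<And>k. k \<in> lattice I \<Longrightarrow> 0 \<le> v k" "g \<in> wiener I v" "h \<in> wiener I v"
  shows "(\<lambda>x. g x - h x) \<in> wiener I v"
  using wiener_add[OF assms(1,2) wiener_uminus[OF assms(3)]] by simp

lemma wiener_sum:
  assumes "\<And>k. k \<in> lattice I \<Longrightarrow> 0 \<le> v k"
    and "finite S" "\<And>s. s \<in> S \<Longrightarrow> g s \<in> wiener I v"
  shows "(\<lambda>x. \<Sum>s\<in>S. g s x) \<in> wiener I v"
  using assms(2,3) by (induction S rule: finite_induct) (auto intro: wiener_zero wiener_add assms(1))

lemma wiener_restrict:
  assumes "finite u" "v \<subseteq> u" "g \<in> wiener v wu"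
  shows "(\<lambda>x. g (restrict x v)) \<in> wiener u wu"
proof -
  have int: "integrable (torus v) g"
    using assms(3) by (simp add: wiener_def)
  have "(\<lambda>k. wu k * norm (fourier_coeff u (\<lambda>x. g (restrict x v)) k)) summable_on lattice u
      \<longleftrightarrow> (\<lambda>k. wu k * norm (fourier_coeff v g k)) summable_on lattice v"
    using lattice_mono[OF assms(2)]
    by (intro summable_on_cong_neutral)
      (auto simp: fourier_coeff_restrict[OF assms(1,2) int] fourier_coeff_restrict_eq_0[OF assms(1,2) int])
  then show ?thesis
    using assms(3) integrable_restrict_torus[OF assms(1,2) int] by (simp add: wiener_def)
qed

lemma proj_in_wiener:
  assumes "finite D" "u \<subseteq> D" "f \<in> wiener D w"
    and "\<And>k. k \<in> lattice u \<Longrightarrow> 0 \<le> wu k" "\<And>k. k \<in> lattice u \<Longrightarrow> wu k \<le> w k"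
  shows "proj D f u \<in> wiener u wu"
proof -
  have int: "integrable (torus D) f"
    using assms(3) by (simp add: wiener_def)
  have "(\<lambda>k. w k * norm (fourier_coeff D f k)) summable_on lattice u"
    using assms(3) lattice_mono[OF assms(2)] by (auto simp: wiener_def intro: summable_on_subset)
  then have "(\<lambda>k. wu k * norm (fourier_coeff D f k)) summable_on lattice u"
    by (rule summable_on_comparison_test) (simp_all add: assms(4,5) mult_right_mono)
  then show ?thesis
    using integrable_proj[OF assms(1,2) int]
    by (simp add: wiener_def fourier_coeff_proj[OF assms(1,2) int] cong: summable_on_cong)
qed

lemma anova_in_wiener:
  assumes "finite u" "\<And>k. k \<in> lattice u \<Longrightarrow> 0 \<le> wu k"
    and "\<And>v. v \<subseteq> u \<Longrightarrow> proj D f v \<in> wiener v wu"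
  shows "anova D f u \<in> wiener u wu"
  using assms
proof (induction u rule: finite_psubset_induct)
  case (psubset u)
  have lift: "(\<lambda>x. anova D f v (restrict x v)) \<in> wiener u wu" if "v \<subset> u" for v
  proof -
    have "anova D f v \<in> wiener v wu"
      using that psubset.prems lattice_mono[of v u]
      by (intro psubset.IH) (auto intro: finite_subset[OF _ psubset.hyps])
    then show ?thesis
      using that psubset.hyps by (intro wiener_restrict) auto
  qed
  have "finite {v. v \<subset> u}"
    using finite_Collect_subsets[OF psubset.hyps] by (rule finite_subset[rotated]) auto
  then have "(\<lambda>x. proj D f u x - (\<Sum>v\<in>{v. v \<subset> u}. anova D f v (restrict x v))) \<in> wiener u wu"
    using psubset.prems lift by (intro wiener_diff wiener_sum) (auto simp del: anova.simps)
  then show ?case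
    using psubset.hyps by (subst anova.simps) simp
qed

theorem theorem3p11:
  fixes d :: nat
    and u :: "nat set"
    and w wu :: "(nat \<Rightarrow> int) \<Rightarrow> real"
    and f :: "(nat \<Rightarrow> real) \<Rightarrow> complex"
  assumes u_sub: "u \<subseteq> {1..d}"
    and w_weight: "weight {1..d} w"
    and f_in: "f \<in> wiener {1..d} w"
    and wu_weight: "weight u wu"
    and wu_le: "\<forall>k\<in>lattice {1..d}. (\<forall>i\<in>{1..d} - u. k i = 0) \<longrightarrow> wu k \<le> w k"
  shows "proj {1..d} f u \<in> wiener u wu \<and> anova {1..d} f u \<in> wiener u wu"
proof -
  have "finite u"
    using u_sub finite_subset by blast
  have nonneg: "0 \<le> wu k" if "k \<in> lattice u" for k
    using wu_weight that by (auto simp: weight_def intro: order_trans[OF zero_le_one])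
  have "wu k \<le> w k" if "k \<in> lattice u" for k
  proof -
    have "k \<in> lattice {1..d}"
      using lattice_mono[OF u_sub] that by blast
    moreover have "\<forall>i\<in>{1..d} - u. k i = 0"
      using that by (simp add: lattice_def)
    ultimately show ?thesis
      using wu_le by blast
  qed
  then have proj: "proj {1..d} f v \<in> wiener v wu" if "v \<subseteq> u" for v
    using that u_sub f_in nonneg lattice_mono[OF that]
    by (intro proj_in_wiener[where w = w]) auto
  show ?thesis
    using proj[OF order_refl] anova_in_wiener[OF \<open>finite u\<close> nonneg proj] by simp
qed

end
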